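(* Let $n\ge2$, $k\ge0$, $\nu_1,\ldots,\nu_n>0$. The set of polynomials \[ \psi^{BG}_{j_1,\ldots,j_{n-1}}=CK_n^{BG}\Big(\big(L_+^{[n-1]}\big)^{j_{n-1}}CK_{n-1}^{BG}\Big(\cdots\big(L_+^{[2]}\big)^{j_2}CK_2^{BG}\big(x_1^{j_1}\big)\cdots\Big)\Big), \] where $(j_1,\ldots,j_{n-1})$ ranges over nonnegative integer tuples with $\sum_{\ell=1}^{n-1}j_\ell=k$, is a basis of $\mathcal{H}^{BG}_k(\mathbb{R}^n)$.
   Context: For $m\le n$: $L_-^{[m]}=\sum_{j=1}^m\big(x_j\partial_{x_j}^2+2\nu_j\partial_{x_j}\big)$, $L_+^{[m]}=\sum_{j=1}^m x_j$ (multiplication). $\mathcal{H}^{BG}_k(\mathbb{R}^n)$ is the space of real homogeneous degree-$k$ polynomials in $x_1,\ldots,x_n$ annihilated by $L_-^{[n]}$. For $2\le m\le n$ and a homogeneous polynomial $p$ of degree $d$ in $x_1,\ldots,x_{m-1}$, $CK_m^{BG}(p)=\Gamma(2\nu_m)\sum_{j=0}^d\frac{(-x_mL_-^{[m-1]})^j}{j!\,\Gamma(j+2\nu_m)}p$. *)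

theory Defs
  imports "HOL-Analysis.Analysis" "HOL-Library.Function_Algebras"
begin

text \<open>Real polynomials in variables x_1, x_2, ... are represented by their coefficient
functions: a polynomial p is a map from exponent vectors alpha (nat => nat, alpha i = exponent
of x_i) to real coefficients.\<close>

type_synonym rpoly = "(nat \<Rightarrow> nat) \<Rightarrow> real"

text \<open>p is a homogeneous polynomial of degree k in x_1..x_n (finitely many monomials follows).\<close>
definition hom_poly :: "nat \<Rightarrow> nat \<Rightarrow> rpoly \<Rightarrow> bool" where
  "hom_poly n k p \<longleftrightarrow>
     (\<forall>\<alpha>. p \<alpha> \<noteq> 0 \<longrightarrow> (\<forall>i. \<alpha> i \<noteq> 0 \<longrightarrow> i \<in> {1..n}) \<and> sum \<alpha> {1..n} = k)"

definition mulx :: "nat \<Rightarrow> rpoly \<Rightarrow> rpoly" where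
  "mulx i p = (\<lambda>\<alpha>. if 0 < \<alpha> i then p (\<alpha>(i := \<alpha> i - 1)) else 0)"

definition dx :: "nat \<Rightarrow> rpoly \<Rightarrow> rpoly" where
  "dx i p = (\<lambda>\<alpha>. real (\<alpha> i + 1) * p (\<alpha>(i := \<alpha> i + 1)))"

definition Lminus :: "(nat \<Rightarrow> real) \<Rightarrow> nat \<Rightarrow> rpoly \<Rightarrow> rpoly" where
  "Lminus \<nu> m p = (\<lambda>\<alpha>. \<Sum>j\<in>{1..m}. mulx j (dx j (dx j p)) \<alpha> + 2 * \<nu> j * dx j p \<alpha>)"

definition Lplus :: "nat \<Rightarrow> rpoly \<Rightarrow> rpoly" where
  "Lplus m p = (\<lambda>\<alpha>. \<Sum>j\<in>{1..m}. mulx j p \<alpha>)"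

definition x1pow :: "nat \<Rightarrow> rpoly" where
  "x1pow a = (\<lambda>\<alpha>. if \<alpha> = (\<lambda>_. 0)(1 := a) then 1 else 0)"

definition CK :: "(nat \<Rightarrow> real) \<Rightarrow> nat \<Rightarrow> nat \<Rightarrow> rpoly \<Rightarrow> rpoly" where
  "CK \<nu> m d p = (\<lambda>\<alpha>. Gamma (2 * \<nu> m) *
      (\<Sum>j\<in>{0..d}. ((\<lambda>q. (\<lambda>\<beta>. - mulx m (Lminus \<nu> (m - 1) q) \<beta>)) ^^ j) p \<alpha>
                     / (fact j * Gamma (real j + 2 * \<nu> m))))"

text \<open>The degree passed to CK_m is the degree
  j_1 + ... + j_{m-1} of its (homogeneous) argument.\<close>
fun psiG :: "(nat \<Rightarrow> real) \<Rightarrow> (nat \<Rightarrow> nat) \<Rightarrow> nat \<Rightarrow> rpoly" where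
  "psiG \<nu> jj 0 = 0"
| "psiG \<nu> jj (Suc 0) = x1pow (jj 1)"
| "psiG \<nu> jj (Suc (Suc 0)) = CK \<nu> 2 (jj 1) (psiG \<nu> jj 1)"
| "psiG \<nu> jj (Suc (Suc (Suc m))) =
     CK \<nu> (m + 3) (sum jj {1..m+2}) ((Lplus (m + 2) ^^ jj (m + 2)) (psiG \<nu> jj (m + 2)))"

definition HBG :: "(nat \<Rightarrow> real) \<Rightarrow> nat \<Rightarrow> nat \<Rightarrow> rpoly set" where
  "HBG \<nu> n k = {p. hom_poly n k p \<and> Lminus \<nu> n p = 0}"

definition Jset :: "nat \<Rightarrow> nat \<Rightarrow> (nat \<Rightarrow> nat) set" where
  "Jset n k = {jj. (\<forall>i. i \<notin> {1..n-1} \<longrightarrow> jj i = 0) \<and> sum jj {1..n-1} = k}"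

definition pscale :: "real \<Rightarrow> rpoly \<Rightarrow> rpoly" where
  "pscale c p = (\<lambda>\<alpha>. c * p \<alpha>)"

definition is_basis_family :: "('i \<Rightarrow> rpoly) \<Rightarrow> 'i set \<Rightarrow> rpoly set \<Rightarrow> bool" where
  "is_basis_family b I V \<longleftrightarrow>
     b ` I \<subseteq> V \<and> inj_on b I \<and> \<not> module.dependent pscale (b ` I) \<and> module.span pscale (b ` I) = V"

end

(* The psiG are linearly independent by induction on the number of variables.
   Since CK_m p restricts to p on the hyperplane x_m = 0, a linear relation among
   the psiG restricts to one among their CK-arguments, which have the form
   sum_j (L_+)^j h_j with every h_j a combination of psiG in one variable fewer and
   hence annihilated by L_-.  The commutator [L_-, L_+] = 2 (E + nu_1 + ... + nu_m),
   E the Euler operator, makes such a Fischer decomposition unique, so the relation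
   is trivial by the induction hypothesis.

   For spanning, the |J| independent CK-arguments lie in the space of homogeneous
   degree-k polynomials in x_1, ..., x_(n-1), which is spanned by |J| monomials, so
   they span it.  An element f of H^BG_k is determined by its restriction to
   x_n = 0, because L_- f = 0 expresses its coefficients of x_n-degree a + 1
   through those of degree a.  Hence f is the CK extension of its restriction, a
   combination of the psiG. *)

theory Submission
  imports Defs
begin

lemma sum_apply: "(\<Sum>a\<in>A. f a) x = (\<Sum>a\<in>A. f a x)"
  by (induction A rule: infinite_finite_induct) auto

lemma sum_atLeast1_atMost_last:
  assumes "1 \<le> (m::nat)"
  shows "sum f {1..m} = f m + sum f {1..m - 1}"
proof -
  have "{1..m} = insert m {1..m - 1}" "m \<notin> {1..m - 1}"
    using assms by auto
  then show ?thesis by simp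
qed

lemma sum_fun_upd_notin: "i \<notin> A \<Longrightarrow> sum (f(i := v)) A = sum f A"
  by (rule sum.cong) auto

lemma sum_fun_upd_add:
  assumes "finite A" "i \<in> A"
  shows "sum (\<alpha>(i := v)) A + \<alpha> i = sum \<alpha> A + (v::nat)"
  using sum.remove[OF assms, of "\<alpha>(i := v)"] sum.remove[OF assms, of \<alpha>]
  by (simp add: sum_fun_upd_notin)

lemma pscale_apply: "pscale c p \<alpha> = c * p \<alpha>"
  by (simp add: pscale_def)

interpretation rpoly: vector_space pscale
  by unfold_locales (auto simp: pscale_def fun_eq_iff algebra_simps)

interpretation rpoly_pair: vector_space_pair pscale pscale ..

lemma (in vector_space) span_subset_if_independent_card_ge:
  assumes "finite B" "independent A" "A \<subseteq> span B" "card B \<le> card A"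
  shows "span B \<subseteq> span A"
proof
  fix x assume x: "x \<in> span B"
  show "x \<in> span A"
  proof (rule ccontr)
    assume x_A: "x \<notin> span A"
    have indep: "independent (insert x A)"
      by (rule independent_insertI[OF x_A assms(2)])
    have notin: "x \<notin> A"
      using x_A span_base by blast
    have "insert x A \<subseteq> span B"
      using x assms(3) by blast
    then have "finite (insert x A) \<and> card (insert x A) \<le> card B"
      by (rule independent_span_bound[OF assms(1) indep])
    then show False
      using notin assms(4) by auto
  qed
qed

lemma (in vector_space) span_image_eq_sum:
  assumes "finite I" "inj_on b I" "x \<in> span (b ` I)"
  obtains u where "x = (\<Sum>i\<in>I. scale (u i) (b i))"
proof -
  obtain u where "x = (\<Sum>v\<in>b ` I. scale (u v) v)"
    using assms(1,3) span_finite[of "b ` I"] by auto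
  then have "x = (\<Sum>i\<in>I. scale (u (b i)) (b i))"
    by (simp add: sum.reindex[OF assms(2)])
  then show ?thesis by (rule that)
qed

(* Unlike independence of the image set, this also rules out repetitions in the family. *)
definition independent_family :: "('i \<Rightarrow> rpoly) \<Rightarrow> 'i set \<Rightarrow> bool" where
  "independent_family b I \<longleftrightarrow> (\<forall>c. (\<Sum>i\<in>I. pscale (c i) (b i)) = 0 \<longrightarrow> (\<forall>i\<in>I. c i = 0))"

lemma independent_family_inj_on:
  assumes "independent_family b I" "finite I"
  shows "inj_on b I"
proof (rule inj_onI, rule ccontr)
  fix x y assume xy: "x \<in> I" "y \<in> I" "b x = b y" "x \<noteq> y"
  define c where "c i = (if i = x then 1 else 0) - (if i = y then 1 else (0::real))" for i
  have "(\<Sum>i\<in>I. pscale (c i) (b i)) = 0"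
  proof
    fix \<alpha>
    have "(\<Sum>i\<in>I. pscale (c i) (b i)) \<alpha> =
        (\<Sum>i\<in>I. if i = x then b i \<alpha> else 0) - (\<Sum>i\<in>I. if i = y then b i \<alpha> else 0)"
      unfolding sum_apply pscale_apply c_def sum_subtractf[symmetric] by (rule sum.cong) auto
    then show "(\<Sum>i\<in>I. pscale (c i) (b i)) \<alpha> = 0 \<alpha>"
      using xy assms(2) by simp
  qed
  then have "c x = 0"
    using assms(1) xy unfolding independent_family_def by blast
  then show False using xy by (simp add: c_def)
qed

lemma independent_family_independent:
  assumes "independent_family b I" "finite I"
  shows "\<not> rpoly.dependent (b ` I)"
proof
  assume "rpoly.dependent (b ` I)"
  then obtain u where u: "\<exists>v\<in>b ` I. u v \<noteq> 0" "(\<Sum>v\<in>b ` I. pscale (u v) v) = 0"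
    using rpoly.dependent_finite[of "b ` I"] assms(2) by auto
  have "(\<Sum>i\<in>I. pscale (u (b i)) (b i)) = 0"
    using u(2) by (simp add: sum.reindex[OF independent_family_inj_on[OF assms]])
  then have "\<forall>i\<in>I. u (b i) = 0"
    using spec[OF assms(1)[unfolded independent_family_def], of "\<lambda>i. u (b i)"] by blast
  then show False
    using u(1) by blast
qed

section \<open>The operators \<open>L\<^sub>-\<close> and \<open>L\<^sub>+\<close>\<close>

definition Lminus_term :: "(nat \<Rightarrow> real) \<Rightarrow> nat \<Rightarrow> rpoly \<Rightarrow> rpoly" where
  "Lminus_term \<nu> j p = mulx j (dx j (dx j p)) + pscale (2 * \<nu> j) (dx j p)"

lemma Lminus_eq_sum: "Lminus \<nu> m p = (\<Sum>j\<in>{1..m}. Lminus_term \<nu> j p)"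
  by (simp add: Lminus_def Lminus_term_def fun_eq_iff sum_apply pscale_def)

lemma Lplus_eq_sum: "Lplus m p = (\<Sum>j\<in>{1..m}. mulx j p)"
  by (simp add: Lplus_def fun_eq_iff sum_apply)

lemma Lminus_apply:
  "Lminus \<nu> m q \<alpha> =
    (\<Sum>j\<in>{1..m}. (real (\<alpha> j) + 1) * (real (\<alpha> j) + 2 * \<nu> j) * q (\<alpha>(j := \<alpha> j + 1)))"
  unfolding Lminus_def
proof (rule sum.cong[OF refl])
  fix j
  show "mulx j (dx j (dx j q)) \<alpha> + 2 * \<nu> j * dx j q \<alpha> =
      (real (\<alpha> j) + 1) * (real (\<alpha> j) + 2 * \<nu> j) * q (\<alpha>(j := \<alpha> j + 1))"
    by (cases "\<alpha> j") (auto simp: mulx_def dx_def algebra_simps)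
qed

lemma linear_mulx: "Vector_Spaces.linear pscale pscale (mulx i)"
  by (simp add: Vector_Spaces.linear_iff rpoly.vector_space_axioms mulx_def pscale_def fun_eq_iff)

lemma linear_dx: "Vector_Spaces.linear pscale pscale (dx i)"
  by (simp add: Vector_Spaces.linear_iff rpoly.vector_space_axioms dx_def pscale_def fun_eq_iff
      algebra_simps)

lemma linear_Lminus_term: "Vector_Spaces.linear pscale pscale (Lminus_term \<nu> j)"
  by (simp add: Vector_Spaces.linear_iff rpoly.vector_space_axioms Lminus_term_def mulx_def dx_def
      pscale_def       fun_eq_iff algebra_simps)

lemma linear_Lminus: "Vector_Spaces.linear pscale pscale (Lminus \<nu> m)"
  unfolding Lminus_eq_sum by (rule rpoly_pair.linear_compose_sum) (auto intro: linear_Lminus_term)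

lemma linear_Lplus: "Vector_Spaces.linear pscale pscale (Lplus m)"
  unfolding Lplus_eq_sum by (rule rpoly_pair.linear_compose_sum) (auto intro: linear_mulx)

lemma linear_funpow:
  "Vector_Spaces.linear pscale pscale f \<Longrightarrow> Vector_Spaces.linear pscale pscale (f ^^ n)"
  by (induction n) (auto intro: Vector_Spaces.linear_compose rpoly.linear_id)

lemma mulx_dx_apply: "mulx j (dx j q) \<alpha> = real (\<alpha> j) * q \<alpha>"
  by (cases "\<alpha> j") (auto simp: mulx_def dx_def fun_upd_idem)

lemma dx_mulx:
  "dx j (mulx i q) = (if i = j then mulx i (dx j q) + q else mulx i (dx j q))"
  by (cases "i = j")
    (auto simp: fun_eq_iff mulx_dx_apply dx_def mulx_def fun_upd_twist algebra_simps)

lemma mulx_commute: "mulx i (mulx j q) = mulx j (mulx i q)"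
  by (cases "i = j") (auto simp: fun_eq_iff mulx_def fun_upd_twist)

lemma Lminus_term_mulx:
  "Lminus_term \<nu> j (mulx i q) = mulx i (Lminus_term \<nu> j q) +
     (if i = j then pscale 2 (mulx j (dx j q)) + pscale (2 * \<nu> j) q else 0)"
proof (cases "i = j")
  case True
  have d1: "dx j (mulx j q) = mulx j (dx j q) + q"
    by (simp add: dx_mulx)
  have d2: "dx j (dx j (mulx j q)) = mulx j (dx j (dx j q)) + pscale 2 (dx j q)"
    by (simp add: d1 dx_mulx rpoly_pair.linear_add[OF linear_dx] fun_eq_iff pscale_def)
  show ?thesis
    unfolding Lminus_term_def True d2 unfolding d1
    by (simp only: rpoly_pair.linear_add[OF linear_mulx] rpoly_pair.linear_scale[OF linear_mulx]
        if_True)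
      (simp add: fun_eq_iff pscale_def algebra_simps)
next
  case False
  then show ?thesis
    unfolding Lminus_term_def
    by (simp add: dx_mulx mulx_commute rpoly_pair.linear_add[OF linear_mulx]
        rpoly_pair.linear_scale[OF linear_mulx])
qed

section \<open>Homogeneous polynomials\<close>

lemma hom_poly_apply:
  "hom_poly n k p \<Longrightarrow> p \<alpha> \<noteq> 0 \<Longrightarrow> (\<forall>i. \<alpha> i \<noteq> 0 \<longrightarrow> i \<in> {1..n}) \<and> sum \<alpha> {1..n} = k"
  unfolding hom_poly_def by blast

lemma hom_poly_0: "hom_poly n k 0"
  by (simp add: hom_poly_def)

lemma hom_poly_scale: "hom_poly n k p \<Longrightarrow> hom_poly n k (pscale c p)"
  unfolding hom_poly_def pscale_def by auto

lemma hom_poly_sum: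
  assumes "\<And>i. i \<in> A \<Longrightarrow> hom_poly n k (f i)"
  shows "hom_poly n k (\<Sum>i\<in>A. f i)"
  unfolding hom_poly_def
proof (intro allI impI)
  fix \<alpha> assume "(\<Sum>i\<in>A. f i) \<alpha> \<noteq> 0"
  then obtain i where "i \<in> A" "f i \<alpha> \<noteq> 0"
    unfolding sum_apply by (meson sum.not_neutral_contains_not_neutral)
  then show "(\<forall>i. \<alpha> i \<noteq> 0 \<longrightarrow> i \<in> {1..n}) \<and> sum \<alpha> {1..n} = k"
    using hom_poly_apply[OF assms, of i \<alpha>] by blast
qed

lemma hom_poly_add: "hom_poly n k p \<Longrightarrow> hom_poly n k q \<Longrightarrow> hom_poly n k (p + q)"
  using hom_poly_sum[of UNIV n k "\<lambda>b. if b then p else q"] by (simp add: UNIV_bool add.commute)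

lemma hom_poly_apply_fun_upd:
  assumes "hom_poly m k q" "q (\<alpha>(i := v)) \<noteq> 0" "i \<in> {1..m}"
  shows "(\<forall>l. \<alpha> l \<noteq> 0 \<longrightarrow> l \<in> {1..m}) \<and> sum \<alpha> {1..m} + v = k + \<alpha> i"
proof -
  note supp_deg = hom_poly_apply[OF assms(1), of "\<alpha>(i := v)", OF assms(2)]
  have supp: "\<forall>l. (\<alpha>(i := v)) l \<noteq> 0 \<longrightarrow> l \<in> {1..m}"
    by (rule conjunct1[OF supp_deg])
  have deg: "sum (\<alpha>(i := v)) {1..m} = k"
    by (rule conjunct2[OF supp_deg])
  have "\<alpha> l \<noteq> 0 \<Longrightarrow> l \<in> {1..m}" for l
    using supp assms(3) by (cases "l = i") auto
  moreover have "sum \<alpha> {1..m} + v = k + \<alpha> i"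
    using sum_fun_upd_add[of "{1..m}" i \<alpha> v] deg assms(3) by simp
  ultimately show ?thesis by blast
qed

lemma hom_poly_apply_eq_0: "hom_poly M d p \<Longrightarrow> M < m \<Longrightarrow> \<beta> m \<noteq> 0 \<Longrightarrow> p \<beta> = 0"
  unfolding hom_poly_def by fastforce

lemma hom_poly_apply_fun_upd_last:
  assumes "hom_poly (m - 1) e q" "1 \<le> m" "q (\<alpha>(m := 0)) \<noteq> 0"
  shows "(\<forall>l. \<alpha> l \<noteq> 0 \<longrightarrow> l \<in> {1..m}) \<and> sum \<alpha> {1..m} = e + \<alpha> m"
proof -
  note supp_deg = hom_poly_apply[OF assms(1), of "\<alpha>(m := 0)", OF assms(3)]
  have "sum (\<alpha>(m := 0)) {1..m - 1} = sum \<alpha> {1..m - 1}"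
    by (rule sum_fun_upd_notin) auto
  then have "sum \<alpha> {1..m} = e + \<alpha> m"
    using conjunct2[OF supp_deg] sum_atLeast1_atMost_last[OF assms(2), of \<alpha>] by simp
  moreover have "l \<in> {1..m}" if "\<alpha> l \<noteq> 0" for l
  proof (cases "l = m")
    case False
    then have "(\<alpha>(m := 0)) l \<noteq> 0" using that by simp
    then have "l \<in> {1..m-1}" using conjunct1[OF supp_deg] by blast
    then show ?thesis by auto
  qed (use assms(2) in simp)
  ultimately show ?thesis by blast
qed

lemma hom_poly_mulx:
  assumes "hom_poly m k q" "i \<in> {1..m}"
  shows "hom_poly m (Suc k) (mulx i q)"
  unfolding hom_poly_def
proof (intro allI impI)
  fix \<alpha> assume "mulx i q \<alpha> \<noteq> 0"
  then have pos: "0 < \<alpha> i" and nz: "q (\<alpha>(i := \<alpha> i - 1)) \<noteq> 0"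
    by (auto simp: mulx_def split: if_splits)
  note h = hom_poly_apply_fun_upd[OF assms(1) nz assms(2)]
  show "(\<forall>l. \<alpha> l \<noteq> 0 \<longrightarrow> l \<in> {1..m}) \<and> sum \<alpha> {1..m} = Suc k"
  proof
    show "\<forall>l. \<alpha> l \<noteq> 0 \<longrightarrow> l \<in> {1..m}" by (rule conjunct1[OF h])
    show "sum \<alpha> {1..m} = Suc k" using conjunct2[OF h] pos by linarith
  qed
qed

lemma hom_poly_Lplus:
  assumes "hom_poly m k q"
  shows "hom_poly m (Suc k) (Lplus m q)"
  unfolding Lplus_eq_sum by (rule hom_poly_sum) (rule hom_poly_mulx[OF assms])

lemma hom_poly_Lplus_funpow: "hom_poly m k q \<Longrightarrow> hom_poly m (k + j) ((Lplus m ^^ j) q)"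
  by (induction j) (simp_all add: hom_poly_Lplus)

lemma Lminus_apply_nonzero:
  assumes "hom_poly m k q" "Lminus \<nu> m q \<alpha> \<noteq> 0"
  shows "(\<forall>l. \<alpha> l \<noteq> 0 \<longrightarrow> l \<in> {1..m}) \<and> Suc (sum \<alpha> {1..m}) = k"
proof -
  obtain j where j: "j \<in> {1..m}"
    and "(real (\<alpha> j) + 1) * (real (\<alpha> j) + 2 * \<nu> j) * q (\<alpha>(j := \<alpha> j + 1)) \<noteq> 0"
    using assms(2) unfolding Lminus_apply by (rule sum.not_neutral_contains_not_neutral)
  then have nz: "q (\<alpha>(j := \<alpha> j + 1)) \<noteq> 0" by simp
  note h = hom_poly_apply_fun_upd[OF assms(1) nz j]
  show ?thesis
  proof
    show "\<forall>l. \<alpha> l \<noteq> 0 \<longrightarrow> l \<in> {1..m}" by (rule conjunct1[OF h])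
    show "Suc (sum \<alpha> {1..m}) = k" using conjunct2[OF h] by linarith
  qed
qed

lemma hom_poly_Lminus:
  assumes "hom_poly m k q"
  shows "hom_poly m (k - 1) (Lminus \<nu> m q)"
  unfolding hom_poly_def
proof (intro allI impI)
  fix \<alpha> assume "Lminus \<nu> m q \<alpha> \<noteq> 0"
  from Lminus_apply_nonzero[OF assms this]
  show "(\<forall>i. \<alpha> i \<noteq> 0 \<longrightarrow> i \<in> {1..m}) \<and> sum \<alpha> {1..m} = k - 1"
    by auto
qed

lemma Lminus_hom_poly_0:
  assumes "hom_poly m 0 q"
  shows "Lminus \<nu> m q = 0"
proof
  fix \<alpha>
  show "Lminus \<nu> m q \<alpha> = 0 \<alpha>"
    using Lminus_apply_nonzero[OF assms, of \<nu> \<alpha>] by auto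
qed

lemma hom_poly_Lminus_funpow: "hom_poly m d p \<Longrightarrow> hom_poly m (d - j) ((Lminus \<nu> m ^^ j) p)"
proof (induction j)
  case (Suc j)
  have "d - j - 1 = d - Suc j" by simp
  then show ?case
    using hom_poly_Lminus[where \<nu> = \<nu>, OF Suc.IH[OF Suc.prems]] by simp
qed simp

lemma Lminus_funpow_beyond_degree:
  assumes "hom_poly m d p"
  shows "(Lminus \<nu> m ^^ Suc d) p = 0"
proof -
  have "hom_poly m 0 ((Lminus \<nu> m ^^ d) p)"
    using hom_poly_Lminus_funpow[OF assms, where j = d] by simp
  then show ?thesis
    unfolding funpow.simps comp_def by (rule Lminus_hom_poly_0)
qed

lemma hom_poly_restrict_last:
  assumes "hom_poly n k f" "1 \<le> n"
  shows "hom_poly (n - 1) k (\<lambda>\<alpha>. if \<alpha> n = 0 then f \<alpha> else 0)"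
  unfolding hom_poly_def
proof (intro allI impI)
  fix \<alpha> assume "(if \<alpha> n = 0 then f \<alpha> else 0) \<noteq> 0"
  then have last: "\<alpha> n = 0" and "f \<alpha> \<noteq> 0" by (auto split: if_splits)
  then have supp: "\<forall>i. \<alpha> i \<noteq> 0 \<longrightarrow> i \<in> {1..n}" and deg: "sum \<alpha> {1..n} = k"
    using hom_poly_apply[OF assms(1), of \<alpha>] by auto
  have "i \<in> {1..n - 1}" if "\<alpha> i \<noteq> 0" for i
  proof -
    have "i \<in> {1..n}" "i \<noteq> n" using supp that last by auto
    then show ?thesis by auto
  qed
  moreover have "sum \<alpha> {1..n - 1} = k"
    using deg last sum_atLeast1_atMost_last[OF assms(2), of \<alpha>] by simp
  ultimately show "(\<forall>i. \<alpha> i \<noteq> 0 \<longrightarrow> i \<in> {1..n - 1}) \<and> sum \<alpha> {1..n - 1} = k"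
    by blast
qed

lemma HBG_subspace: "rpoly.subspace (HBG \<nu> n k)"
  unfolding rpoly.subspace_def HBG_def
  by (simp add: hom_poly_0 hom_poly_add hom_poly_scale rpoly_pair.linear_0[OF linear_Lminus]
      rpoly_pair.linear_add[OF linear_Lminus] rpoly_pair.linear_scale[OF linear_Lminus])

section \<open>Uniqueness of the Fischer decomposition\<close>

lemma Euler_identity:
  assumes "hom_poly m k q"
  shows "(\<Sum>j\<in>{1..m}. mulx j (dx j q)) = pscale (real k) q"
proof
  fix \<alpha>
  have "(\<Sum>j\<in>{1..m}. mulx j (dx j q)) \<alpha> = real (sum \<alpha> {1..m}) * q \<alpha>"
    by (simp add: sum_apply mulx_dx_apply sum_distrib_right)
  also have "\<dots> = real k * q \<alpha>"
    using hom_poly_apply[OF assms] by (cases "q \<alpha> = 0") auto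
  finally show "(\<Sum>j\<in>{1..m}. mulx j (dx j q)) \<alpha> = pscale (real k) q \<alpha>"
    by (simp add: pscale_def)
qed

lemma Lminus_Lplus_commutator:
  assumes "hom_poly m k q"
  shows "Lminus \<nu> m (Lplus m q) =
    Lplus m (Lminus \<nu> m q) + pscale (2 * (real k + (\<Sum>j\<in>{1..m}. \<nu> j))) q"
proof -
  let ?I = "{1..m}"
  have "Lminus \<nu> m (Lplus m q) = (\<Sum>j\<in>?I. \<Sum>i\<in>?I. Lminus_term \<nu> j (mulx i q))"
    unfolding Lminus_eq_sum Lplus_eq_sum rpoly_pair.linear_sum[OF linear_Lminus_term] ..
  also have "\<dots> = (\<Sum>j\<in>?I. \<Sum>i\<in>?I. mulx i (Lminus_term \<nu> j q))
      + (\<Sum>j\<in>?I. pscale 2 (mulx j (dx j q)) + pscale (2 * \<nu> j) q)"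
    by (simp only: Lminus_term_mulx sum.distrib) (simp add: sum.delta sum.distrib)
  also have "(\<Sum>j\<in>?I. \<Sum>i\<in>?I. mulx i (Lminus_term \<nu> j q)) = Lplus m (Lminus \<nu> m q)"
    unfolding Lminus_eq_sum Lplus_eq_sum rpoly_pair.linear_sum[OF linear_mulx] by (rule sum.swap)
  also have "(\<Sum>j\<in>?I. pscale 2 (mulx j (dx j q)) + pscale (2 * \<nu> j) q) =
      pscale (2 * (real k + (\<Sum>j\<in>?I. \<nu> j))) q"
    by (simp only: sum.distrib rpoly.scale_sum_right[symmetric] rpoly.scale_sum_left[symmetric]
        Euler_identity[OF assms]) (simp add: fun_eq_iff pscale_def sum_distrib_left algebra_simps)
  finally show ?thesis .
qed

definition Lminus_Lplus_coeff :: "(nat \<Rightarrow> real) \<Rightarrow> nat \<Rightarrow> nat \<Rightarrow> nat \<Rightarrow> real" where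
  "Lminus_Lplus_coeff \<nu> m e j = real j * (2 * real e + real j - 1 + 2 * (\<Sum>i\<in>{1..m}. \<nu> i))"

lemma Lminus_Lplus_funpow:
  assumes "hom_poly m e h" "Lminus \<nu> m h = 0"
  shows "Lminus \<nu> m ((Lplus m ^^ j) h) =
    pscale (Lminus_Lplus_coeff \<nu> m e j) ((Lplus m ^^ (j - 1)) h)"
proof (induction j)
  case 0
  then show ?case using assms(2) by (simp add: Lminus_Lplus_coeff_def)
next
  case (Suc j)
  have "Lplus m (Lminus \<nu> m ((Lplus m ^^ j) h)) =
      pscale (Lminus_Lplus_coeff \<nu> m e j) ((Lplus m ^^ j) h)"
  proof (cases j)
    case 0
    then show ?thesis
      using assms(2) by (simp add: Lminus_Lplus_coeff_def rpoly_pair.linear_0[OF linear_Lplus])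
  next
    case (Suc j')
    then show ?thesis
      using Suc.IH by (simp add: rpoly_pair.linear_scale[OF linear_Lplus])
  qed
  then have "Lminus \<nu> m ((Lplus m ^^ Suc j) h) =
      pscale (Lminus_Lplus_coeff \<nu> m e j + 2 * (real (e + j) + (\<Sum>i\<in>{1..m}. \<nu> i)))
        ((Lplus m ^^ j) h)"
    using Lminus_Lplus_commutator[OF hom_poly_Lplus_funpow[OF assms(1), of j]]
    by (simp add: rpoly.scale_left_distrib)
  also have "Lminus_Lplus_coeff \<nu> m e j + 2 * (real (e + j) + (\<Sum>i\<in>{1..m}. \<nu> i)) =
      Lminus_Lplus_coeff \<nu> m e (Suc j)"
    by (simp add: Lminus_Lplus_coeff_def algebra_simps)
  finally show ?case by simp
qed

lemma Lminus_funpow_Lplus_funpow: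
  assumes "hom_poly m e h" "Lminus \<nu> m h = 0"
  shows "(Lminus \<nu> m ^^ a) ((Lplus m ^^ j) h) =
    pscale (\<Prod>i<a. Lminus_Lplus_coeff \<nu> m e (j - i)) ((Lplus m ^^ (j - a)) h)"
proof (induction a)
  case (Suc a)
  have "(Lminus \<nu> m ^^ Suc a) ((Lplus m ^^ j) h) =
      pscale (\<Prod>i<a. Lminus_Lplus_coeff \<nu> m e (j - i))
        (pscale (Lminus_Lplus_coeff \<nu> m e (j - a)) ((Lplus m ^^ (j - a - 1)) h))"
    by (simp add: Suc.IH rpoly_pair.linear_scale[OF linear_Lminus] Lminus_Lplus_funpow[OF assms])
  then show ?case
    by (simp add: pscale_def fun_eq_iff mult_ac)
qed (simp add: pscale_def)

lemma Lminus_funpow_Lplus_funpow_less: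
  assumes "hom_poly m e h" "Lminus \<nu> m h = 0" "j < a"
  shows "(Lminus \<nu> m ^^ a) ((Lplus m ^^ j) h) = 0"
proof -
  have "(\<Prod>i<a. Lminus_Lplus_coeff \<nu> m e (j - i)) = 0"
    using assms(3) by (intro prod_zero bexI[of _ j]) (auto simp: Lminus_Lplus_coeff_def)
  then show ?thesis
    by (simp add: Lminus_funpow_Lplus_funpow[OF assms(1,2)] pscale_def fun_eq_iff)
qed

lemma eq_0_if_Lminus_funpow_Lplus_funpow_eq_0:
  assumes "hom_poly m e h" "Lminus \<nu> m h = 0" "0 < (\<Sum>i\<in>{1..m}. \<nu> i)"
    and "(Lminus \<nu> m ^^ j) ((Lplus m ^^ j) h) = 0"
  shows "h = 0"
proof -
  have "Lminus_Lplus_coeff \<nu> m e (j - i) \<noteq> 0" if "i < j" for i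
    using that assms(3) by (simp add: Lminus_Lplus_coeff_def of_nat_diff add_pos_nonneg)
  then have "(\<Prod>i<j. Lminus_Lplus_coeff \<nu> m e (j - i)) \<noteq> 0"
    by simp
  then show ?thesis
    using assms(4) by (simp add: Lminus_funpow_Lplus_funpow[OF assms(1,2)] pscale_def fun_eq_iff)
qed

(* L_-^N annihilates every summand but the last, which it multiplies by a nonzero constant. *)
lemma Lplus_decomposition_unique:
  assumes pos: "0 < (\<Sum>i\<in>{1..m}. \<nu> i)"
    and hom: "\<And>j. hom_poly m (e j) (h j)" and harm: "\<And>j. Lminus \<nu> m (h j) = 0"
  shows "(\<Sum>j\<le>N. (Lplus m ^^ j) (h j)) = 0 \<Longrightarrow> j \<le> N \<Longrightarrow> h j = 0"
proof (induction N arbitrary: j)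
  case (Suc N)
  let ?Lm = "Lminus \<nu> m ^^ Suc N"
  have lin: "Vector_Spaces.linear pscale pscale ?Lm"
    by (rule linear_funpow[OF linear_Lminus])
  have "?Lm ((Lplus m ^^ j) (h j)) = 0" if "j \<le> N" for j
    using that by (intro Lminus_funpow_Lplus_funpow_less[OF hom harm]) simp
  then have lower: "(\<Sum>j\<le>N. ?Lm ((Lplus m ^^ j) (h j))) = 0"
    by (intro sum.neutral) simp
  have "?Lm ((Lplus m ^^ Suc N) (h (Suc N))) = (\<Sum>j\<le>Suc N. ?Lm ((Lplus m ^^ j) (h j)))"
    unfolding sum.atMost_Suc lower by (rule add_0[symmetric])
  also have "\<dots> = ?Lm (\<Sum>j\<le>Suc N. (Lplus m ^^ j) (h j))"
    by (rule rpoly_pair.linear_sum[OF lin, symmetric])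
  also have "\<dots> = 0"
    unfolding Suc.prems(1) by (rule rpoly_pair.linear_0[OF lin])
  finally have top: "h (Suc N) = 0"
    by (rule eq_0_if_Lminus_funpow_Lplus_funpow_eq_0[OF hom harm pos])
  then have "(\<Sum>j\<le>N. (Lplus m ^^ j) (h j)) = 0"
    using Suc.prems(1) unfolding sum.atMost_Suc top
    by (simp only: rpoly_pair.linear_0[OF linear_funpow[OF linear_Lplus]] add_0_right)
  then show ?case
    using Suc.IH Suc.prems(2) top le_Suc_eq by blast
qed simp

section \<open>The Cauchy-Kovalevskaya extension\<close>

lemma Lminus_split_last:
  assumes "1 \<le> m"
  shows "Lminus \<nu> m q \<beta> = Lminus \<nu> (m - 1) q \<beta>
     + (real (\<beta> m) + 1) * (real (\<beta> m) + 2 * \<nu> m) * q (\<beta>(m := \<beta> m + 1))"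
  unfolding Lminus_apply sum_atLeast1_atMost_last[OF assms] by (simp add: add.commute)

(* q viewed as a polynomial in x_m whose coefficient of x_m^a is F a: for M < m,
   L_-^[M] acts coefficientwise. *)
lemma Lminus_apply_slice:
  assumes "M < m" "\<And>\<beta>. q \<beta> = F (\<beta> m) (\<beta>(m := 0))"
  shows "Lminus \<nu> M q \<beta> = Lminus \<nu> M (F (\<beta> m)) (\<beta>(m := 0))"
  unfolding Lminus_apply
proof (rule sum.cong[OF refl])
  fix i assume "i \<in> {1..M}"
  then have "i \<noteq> m" using assms(1) by auto
  then show "(real (\<beta> i) + 1) * (real (\<beta> i) + 2 * \<nu> i) * q (\<beta>(i := \<beta> i + 1)) =
    (real ((\<beta>(m := 0)) i) + 1) * (real ((\<beta>(m := 0)) i) + 2 * \<nu> i) *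
      F (\<beta> m) ((\<beta>(m := 0))(i := (\<beta>(m := 0)) i + 1))"
    by (simp add: assms(2) fun_upd_twist)
qed

lemma CK_step_funpow_apply:
  assumes "hom_poly (m - 1) d p" "1 \<le> m"
  shows "(((\<lambda>q \<beta>. - mulx m (Lminus \<nu> (m - 1) q) \<beta>) ^^ j) p) \<alpha> =
     (if \<alpha> m = j then (-1) ^ j * (Lminus \<nu> (m - 1) ^^ j) p (\<alpha>(m := 0)) else 0)"
proof (induction j arbitrary: \<alpha>)
  case 0
  show ?case
    using hom_poly_apply_eq_0[OF assms(1), of m \<alpha>] assms(2) by (auto simp: fun_upd_idem)
next
  case (Suc j)
  let ?T = "\<lambda>q \<beta>. - mulx m (Lminus \<nu> (m - 1) q) \<beta>"
  let ?L = "Lminus \<nu> (m - 1)"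
  define F where "F a = (if a = j then pscale ((-1) ^ j) ((?L ^^ j) p) else 0)" for a
  have sliced: "(?T ^^ j) p \<beta> = F (\<beta> m) (\<beta>(m := 0))" for \<beta>
    using Suc.IH[of \<beta>] by (simp add: F_def pscale_def)
  have slice: "?L ((?T ^^ j) p) \<beta> = ?L (F (\<beta> m)) (\<beta>(m := 0))" for \<beta>
    by (rule Lminus_apply_slice[where F = F and m = m, OF _ sliced]) (use assms(2) in simp)
  show ?case
  proof (cases "0 < \<alpha> m")
    case True
    have "(?T ^^ Suc j) p \<alpha> = - ?L (F (\<alpha> m - 1)) (\<alpha>(m := 0))"
      using True slice[of "\<alpha>(m := \<alpha> m - 1)"] by (simp add: mulx_def)
    also have "\<dots> = (if \<alpha> m = Suc j then (-1) ^ Suc j * (?L ^^ Suc j) p (\<alpha>(m := 0)) else 0)"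
      using True
      by (cases "\<alpha> m = Suc j")
        (auto simp: F_def rpoly_pair.linear_scale[OF linear_Lminus]
          rpoly_pair.linear_0[OF linear_Lminus] pscale_apply)
    finally show ?thesis .
  qed (simp add: mulx_def)
qed

definition CK_weight :: "(nat \<Rightarrow> real) \<Rightarrow> nat \<Rightarrow> nat \<Rightarrow> real" where
  "CK_weight \<nu> m a = Gamma (2 * \<nu> m) * (-1) ^ a / (fact a * Gamma (real a + 2 * \<nu> m))"

lemma CK_weight_0: "0 < \<nu> m \<Longrightarrow> CK_weight \<nu> m 0 = 1"
  by (simp add: CK_weight_def Gamma_real_pos[THEN less_imp_neq, symmetric])

lemma CK_weight_Suc:
  assumes "0 < \<nu> m"
  shows "(real a + 1) * (real a + 2 * \<nu> m) * CK_weight \<nu> m (Suc a) = - CK_weight \<nu> m a"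
proof -
  let ?c = "real a + 2 * \<nu> m"
  let ?k = "(real a + 1) * ?c"
  have c: "?c > 0" using assms by simp
  then have k: "?k \<noteq> 0" by (smt (verit) of_nat_0_le_iff mult_pos_pos)
  have "?c \<notin> \<int>\<^sub>\<le>\<^sub>0" using c by auto
  then have "Gamma (real (Suc a) + 2 * \<nu> m) = ?c * Gamma ?c"
    using Gamma_plus1[of ?c] by (simp add: algebra_simps)
  then have "CK_weight \<nu> m (Suc a) =
      - (Gamma (2 * \<nu> m) * (-1) ^ a) / (?k * (fact a * Gamma ?c))"
    unfolding CK_weight_def fact_Suc by (simp add: algebra_simps)
  then show ?thesis
    by (simp only: times_divide_eq_right nonzero_mult_divide_mult_cancel_left[OF k])
      (simp add: CK_weight_def)
qed

lemma CK_apply: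
  assumes "hom_poly (m - 1) d p" "1 \<le> m"
  shows "CK \<nu> m d p \<alpha> = (if \<alpha> m \<le> d
    then CK_weight \<nu> m (\<alpha> m) * (Lminus \<nu> (m - 1) ^^ \<alpha> m) p (\<alpha>(m := 0)) else 0)"
proof -
  have "CK \<nu> m d p \<alpha> = Gamma (2 * \<nu> m) * (\<Sum>j\<in>{0..d}. if j = \<alpha> m then
      (-1) ^ j * (Lminus \<nu> (m - 1) ^^ j) p (\<alpha>(m := 0)) / (fact j * Gamma (real j + 2 * \<nu> m))
      else 0)"
    unfolding CK_def CK_step_funpow_apply[OF assms]
    by (intro arg_cong2[where f = "(*)"] sum.cong) auto
  then show ?thesis
    by (simp add: CK_weight_def)
qed

lemma CK_apply_restrict:
  assumes "hom_poly (m - 1) d p" "1 \<le> m" "0 < \<nu> m" "\<alpha> m = 0"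
  shows "CK \<nu> m d p \<alpha> = p \<alpha>"
  using assms(3,4) by (simp add: CK_apply[OF assms(1,2)] CK_weight_0 fun_upd_idem)

lemma hom_poly_CK:
  assumes "hom_poly (m - 1) d p" "1 \<le> m"
  shows "hom_poly m d (CK \<nu> m d p)"
  unfolding hom_poly_def
proof (intro allI impI)
  fix \<alpha> assume "CK \<nu> m d p \<alpha> \<noteq> 0"
  then have le: "\<alpha> m \<le> d" and nz: "(Lminus \<nu> (m - 1) ^^ \<alpha> m) p (\<alpha>(m := 0)) \<noteq> 0"
    unfolding CK_apply[OF assms] by (auto split: if_splits)
  show "(\<forall>i. \<alpha> i \<noteq> 0 \<longrightarrow> i \<in> {1..m}) \<and> sum \<alpha> {1..m} = d"
    using hom_poly_apply_fun_upd_last[OF hom_poly_Lminus_funpow[OF assms(1)] assms(2) nz] le by simp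
qed

lemma Lminus_pred_CK_apply:
  assumes "hom_poly (m - 1) d p" "1 \<le> m"
  shows "Lminus \<nu> (m - 1) (CK \<nu> m d p) \<beta> = (if \<beta> m \<le> d
    then CK_weight \<nu> m (\<beta> m) * (Lminus \<nu> (m - 1) ^^ Suc (\<beta> m)) p (\<beta>(m := 0)) else 0)"
proof -
  let ?L = "Lminus \<nu> (m - 1)"
  define F where "F a = (if a \<le> d then pscale (CK_weight \<nu> m a) ((?L ^^ a) p) else 0)" for a
  have "CK \<nu> m d p \<gamma> = F (\<gamma> m) (\<gamma>(m := 0))" for \<gamma>
    unfolding CK_apply[OF assms] F_def by (simp add: pscale_apply)
  then have "?L (CK \<nu> m d p) \<beta> = ?L (F (\<beta> m)) (\<beta>(m := 0))"
    by (rule Lminus_apply_slice[where F = F and m = m, rotated]) (use assms(2) in simp)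
  then show ?thesis
    by (simp add: F_def rpoly_pair.linear_scale[OF linear_Lminus]
        rpoly_pair.linear_0[OF linear_Lminus] pscale_apply)
qed

lemma Lminus_CK:
  assumes "hom_poly (m - 1) d p" "1 \<le> m" "0 < \<nu> m"
  shows "Lminus \<nu> m (CK \<nu> m d p) = 0"
proof
  fix \<beta>
  define X where "X = (Lminus \<nu> (m - 1) ^^ Suc (\<beta> m)) p (\<beta>(m := 0))"
  define c where "c = (real (\<beta> m) + 1) * (real (\<beta> m) + 2 * \<nu> m)"
  have "Lminus \<nu> m (CK \<nu> m d p) \<beta> =
      (if \<beta> m \<le> d then CK_weight \<nu> m (\<beta> m) * X else 0) +
      c * (if Suc (\<beta> m) \<le> d then CK_weight \<nu> m (Suc (\<beta> m)) * X else 0)"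
    unfolding Lminus_split_last[OF assms(2)] Lminus_pred_CK_apply[OF assms(1,2)]
      CK_apply[OF assms(1,2)] X_def c_def by simp
  also have "\<dots> = 0"
  proof (cases "Suc (\<beta> m) \<le> d")
    case True
    have "CK_weight \<nu> m (\<beta> m) + c * CK_weight \<nu> m (Suc (\<beta> m)) = 0"
      using CK_weight_Suc[where \<nu> = \<nu> and m = m, OF assms(3), of "\<beta> m"] unfolding c_def by simp
    then have "(CK_weight \<nu> m (\<beta> m) + c * CK_weight \<nu> m (Suc (\<beta> m))) * X = 0"
      by simp
    then show ?thesis
      using True by (simp add: distrib_right mult.assoc)
  next
    case False
    moreover have "\<beta> m = d \<Longrightarrow> X = 0"
      unfolding X_def using Lminus_funpow_beyond_degree[OF assms(1)] by simp
    ultimately show ?thesis by auto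
  qed
  finally show "Lminus \<nu> m (CK \<nu> m d p) \<beta> = 0 \<beta>" by simp
qed

(* The x_m-part of L_- expresses the coefficients of x_m-degree a + 1 through those of degree a. *)
lemma Lminus_null_eq_0_if_restriction_eq_0:
  assumes "1 \<le> m" "0 < \<nu> m" "Lminus \<nu> m g = 0" "\<And>\<alpha>. \<alpha> m = 0 \<Longrightarrow> g \<alpha> = 0"
  shows "g = 0"
proof -
  have "\<alpha> m = a \<Longrightarrow> g \<alpha> = 0" for a \<alpha>
  proof (induction a arbitrary: \<alpha>)
    case (Suc a)
    let ?\<beta> = "\<alpha>(m := a)"
    have "Lminus \<nu> (m - 1) g ?\<beta> = 0"
      unfolding Lminus_apply by (rule sum.neutral) (use Suc.IH in auto)
    then have "0 = (real a + 1) * (real a + 2 * \<nu> m) * g \<alpha>"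
      using Lminus_split_last[OF assms(1), of \<nu> g ?\<beta>] assms(3) Suc.prems by (simp add: fun_upd_idem)
    moreover have "(real a + 1) * (real a + 2 * \<nu> m) \<noteq> 0"
      using assms(2) by (smt (verit) of_nat_0_le_iff mult_pos_pos)
    ultimately show ?case by simp
  qed (use assms(4) in simp)
  then show ?thesis by auto
qed

lemma sum_CK_apply_restrict:
  assumes "\<And>i. i \<in> I \<Longrightarrow> hom_poly (m - 1) (d i) (p i)" "1 \<le> m" "0 < \<nu> m" "\<alpha> m = 0"
  shows "(\<Sum>i\<in>I. pscale (c i) (CK \<nu> m (d i) (p i))) \<alpha> = (\<Sum>i\<in>I. pscale (c i) (p i)) \<alpha>"
proof -
  have "CK \<nu> m (d i) (p i) \<alpha> = p i \<alpha>" if "i \<in> I" for i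
    using CK_apply_restrict[where \<nu> = \<nu> and m = m and \<alpha> = \<alpha>, OF assms(1)[OF that] assms(2-4)] .
  then show ?thesis
    by (simp add: sum_apply pscale_apply)
qed

lemma sum_eq_0_if_sum_CK_eq_0:
  assumes "\<And>i. i \<in> I \<Longrightarrow> hom_poly (m - 1) (d i) (p i)" "1 \<le> m" "0 < \<nu> m"
    and "(\<Sum>i\<in>I. pscale (c i) (CK \<nu> m (d i) (p i))) = 0"
  shows "(\<Sum>i\<in>I. pscale (c i) (p i)) = 0"
proof
  fix \<alpha>
  show "(\<Sum>i\<in>I. pscale (c i) (p i)) \<alpha> = 0 \<alpha>"
  proof (cases "\<alpha> m = 0")
    case True
    then show ?thesis
      using sum_CK_apply_restrict[where I = I and d = d and p = p and \<nu> = \<nu> and m = m and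
          \<alpha> = \<alpha> and c = c, OF assms(1) assms(2,3) True] assms(4)
      by simp
  next
    case False
    have "p i \<alpha> = 0" if "i \<in> I" for i
      using hom_poly_apply_eq_0[where \<beta> = \<alpha> and m = m, OF assms(1)[OF that] _ False] assms(2)
      by simp
    then show ?thesis
      by (simp add: sum_apply pscale_apply)
  qed
qed

lemma finite_Jset: "finite (Jset n k)"
proof (rule finite_subset)
  show "Jset n k \<subseteq> {f. \<forall>x. (x \<in> {1..n-1} \<longrightarrow> f x \<in> {0..k}) \<and> (x \<notin> {1..n-1} \<longrightarrow> f x = 0)}"
  proof (intro subsetI CollectI allI conjI impI)
    fix jj x assume jj: "jj \<in> Jset n k"
    show "jj x = 0" if "x \<notin> {1..n-1}" using jj that unfolding Jset_def by blast
    assume "x \<in> {1..n-1}"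
    then have "jj x \<le> sum jj {1..n-1}" by (intro member_le_sum) auto
    then show "jj x \<in> {0..k}" using jj unfolding Jset_def by simp
  qed
  show "finite {f. \<forall>x. (x \<in> {1..n-1} \<longrightarrow> f x \<in> {0..k}) \<and> (x \<notin> {1..n-1} \<longrightarrow> f x = (0::nat))}"
    by (rule finite_set_of_finite_funs) auto
qed

lemma Jset_last: "jj \<in> Jset m k \<Longrightarrow> jj m = 0"
proof -
  have "m \<notin> {1..m-1}" by auto
  then show "jj \<in> Jset m k \<Longrightarrow> jj m = 0" unfolding Jset_def by blast
qed

lemma Jset_2: "Jset 2 d = {(\<lambda>_. 0)(1 := d)}"
  unfolding Jset_def by (auto simp: fun_eq_iff)

lemma Jset_Suc_fun_upd:
  assumes "1 \<le> m" "j \<le> d" "jj \<in> Jset m (d - j)"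
  shows "jj(m := j) \<in> Jset (Suc m) d"
proof -
  have "sum (jj(m := j)) {1..m-1} = sum jj {1..m-1}"
    by (rule sum_fun_upd_notin) auto
  then have "sum (jj(m := j)) {1..m} = d"
    using assms sum_atLeast1_atMost_last[OF assms(1), of "jj(m := j)"] by (simp add: Jset_def)
  moreover have "(jj(m := j)) i = 0" if "i \<notin> {1..m}" for i
    using that assms(1,3) unfolding Jset_def by auto
  ultimately show ?thesis
    unfolding Jset_def by simp
qed

lemma Jset_Suc_restrict:
  assumes "1 \<le> m" "jj \<in> Jset (Suc m) d"
  shows "jj m \<le> d \<and> jj(m := 0) \<in> Jset m (d - jj m)"
proof -
  have "sum (jj(m := 0)) {1..m-1} = sum jj {1..m-1}"
    by (rule sum_fun_upd_notin) auto
  moreover have "sum jj {1..m} = d"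
    using assms(2) unfolding Jset_def by simp
  ultimately show ?thesis
    using assms sum_atLeast1_atMost_last[OF assms(1), of jj] unfolding Jset_def by auto
qed

lemma bij_betw_Jset_Suc:
  assumes "1 \<le> m"
  shows "bij_betw (\<lambda>(j, jj). jj(m := j)) (SIGMA j:{..d}. Jset m (d - j)) (Jset (Suc m) d)"
proof (rule bij_betw_byWitness[where f' = "\<lambda>jj. (jj m, jj(m := 0))"])
  show "\<forall>a\<in>SIGMA j:{..d}. Jset m (d - j). (\<lambda>jj. (jj m, jj(m := 0))) ((\<lambda>(j, jj). jj(m := j)) a) = a"
    by (auto simp: Jset_last fun_upd_idem)
  show "\<forall>jj\<in>Jset (Suc m) d. (\<lambda>(j, jj). jj(m := j)) (jj m, jj(m := 0)) = jj"
    by simp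
  show "(\<lambda>(j, jj). jj(m := j)) ` (SIGMA j:{..d}. Jset m (d - j)) \<subseteq> Jset (Suc m) d"
    using Jset_Suc_fun_upd[OF assms] by auto
  show "(\<lambda>jj. (jj m, jj(m := 0))) ` Jset (Suc m) d \<subseteq> (SIGMA j:{..d}. Jset m (d - j))"
    using Jset_Suc_restrict[OF assms] by auto
qed

definition psiG_arg :: "(nat \<Rightarrow> real) \<Rightarrow> (nat \<Rightarrow> nat) \<Rightarrow> nat \<Rightarrow> rpoly" where
  "psiG_arg \<nu> jj m = (if m = 2 then x1pow (jj 1)
     else (Lplus (m - 1) ^^ jj (m - 1)) (psiG \<nu> jj (m - 1)))"

lemma psiG_eq_CK:
  assumes "2 \<le> m"
  shows "psiG \<nu> jj m = CK \<nu> m (sum jj {1..m-1}) (psiG_arg \<nu> jj m)"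
proof -
  obtain k where k: "m = Suc (Suc k)" using assms by (metis add_2_eq_Suc le_Suc_ex)
  then show ?thesis
    by (cases k) (simp_all add: psiG_arg_def numeral_2_eq_2 numeral_3_eq_3 add.commute)
qed

lemma psiG_arg_Suc: "2 \<le> m \<Longrightarrow> psiG_arg \<nu> jj (Suc m) = (Lplus m ^^ jj m) (psiG \<nu> jj m)"
  by (simp add: psiG_arg_def)

lemma hom_poly_x1pow: "hom_poly 1 a (x1pow a)"
  unfolding hom_poly_def x1pow_def by auto

lemma hom_poly_psiG: "2 \<le> m \<Longrightarrow> hom_poly m (sum jj {1..m-1}) (psiG \<nu> jj m)"
proof (induction m rule: nat_induct_at_least)
  case base
  show ?case
    using hom_poly_CK[of 2 "jj 1" "x1pow (jj 1)"] hom_poly_x1pow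
    by (simp add: psiG_eq_CK psiG_arg_def)
next
  case (Suc m)
  have "sum jj {1..m-1} + jj m = sum jj {1..Suc m - 1}"
    using Suc.hyps by (cases m) (auto simp: add.commute)
  then have "hom_poly (Suc m - 1) (sum jj {1..Suc m - 1}) (psiG_arg \<nu> jj (Suc m))"
    using hom_poly_Lplus_funpow[OF Suc.IH, of "jj m"] Suc.hyps by (simp add: psiG_arg_Suc)
  then show ?case
    using hom_poly_CK Suc.hyps by (simp add: psiG_eq_CK)
qed

lemma hom_poly_psiG_arg:
  assumes "2 \<le> m"
  shows "hom_poly (m - 1) (sum jj {1..m-1}) (psiG_arg \<nu> jj m)"
proof (cases "m = 2")
  case True
  then show ?thesis using hom_poly_x1pow by (simp add: psiG_arg_def)
next
  case False
  then obtain m' where m': "m = Suc m'" "2 \<le> m'" using assms by (cases m) auto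
  have "sum jj {1..m'-1} + jj m' = sum jj {1..m'}"
    using m'(2) by (cases m') (auto simp: add.commute)
  then show ?thesis
    using hom_poly_Lplus_funpow[OF hom_poly_psiG[OF m'(2), of jj \<nu>], of "jj m'"] m'
    by (simp add: psiG_arg_Suc)
qed

lemma Lminus_psiG: "2 \<le> m \<Longrightarrow> 0 < \<nu> m \<Longrightarrow> Lminus \<nu> m (psiG \<nu> jj m) = 0"
  using Lminus_CK[OF hom_poly_psiG_arg] by (simp add: psiG_eq_CK)

lemma psiG_in_HBG:
  assumes "2 \<le> n" "0 < \<nu> n" "jj \<in> Jset n k"
  shows "psiG \<nu> jj n \<in> HBG \<nu> n k"
  using hom_poly_psiG[OF assms(1), of jj \<nu>] Lminus_psiG[where \<nu> = \<nu>, OF assms(1,2)] assms(3)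
  by (simp add: HBG_def Jset_def)

lemma psiG_cong:
  "2 \<le> m \<Longrightarrow> (\<And>i. i \<in> {1..m-1} \<Longrightarrow> jj i = jj' i) \<Longrightarrow> psiG \<nu> jj m = psiG \<nu> jj' m"
proof (induction m rule: nat_induct_at_least)
  case base
  then show ?case by (simp add: psiG_eq_CK psiG_arg_def)
next
  case (Suc m)
  have "psiG \<nu> jj m = psiG \<nu> jj' m"
    using Suc.prems by (intro Suc.IH) auto
  moreover have "jj m = jj' m" and "sum jj {1..m} = sum jj' {1..m}"
    using Suc.prems Suc.hyps by auto
  ultimately show ?case
    using Suc.hyps by (simp add: psiG_eq_CK psiG_arg_Suc)
qed

lemma sum_psiG_arg_Suc:
  assumes "2 \<le> m"
  shows "(\<Sum>jj\<in>Jset (Suc m) d. pscale (c jj) (psiG_arg \<nu> jj (Suc m))) =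
    (\<Sum>j\<le>d. (Lplus m ^^ j) (\<Sum>jj\<in>Jset m (d - j). pscale (c (jj(m := j))) (psiG \<nu> jj m)))"
proof -
  have arg: "psiG_arg \<nu> (jj(m := j)) (Suc m) = (Lplus m ^^ j) (psiG \<nu> jj m)" for jj j
  proof -
    have "psiG \<nu> (jj(m := j)) m = psiG \<nu> jj m"
      using assms by (intro psiG_cong) auto
    then show ?thesis
      using assms by (simp add: psiG_arg_Suc)
  qed
  have "(\<Sum>jj\<in>Jset (Suc m) d. pscale (c jj) (psiG_arg \<nu> jj (Suc m))) =
      (\<Sum>(j, jj)\<in>(SIGMA j:{..d}. Jset m (d - j)).
        pscale (c (jj(m := j))) (psiG_arg \<nu> (jj(m := j)) (Suc m)))"
    using sum.reindex_bij_betw[OF bij_betw_Jset_Suc[of m d],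
        where g = "\<lambda>jj. pscale (c jj) (psiG_arg \<nu> jj (Suc m))"] assms
    by (simp add: case_prod_beta')
  also have "\<dots> = (\<Sum>j\<le>d. \<Sum>jj\<in>Jset m (d - j). pscale (c (jj(m := j))) ((Lplus m ^^ j) (psiG \<nu> jj m)))"
    by (subst sum.Sigma) (simp_all add: finite_Jset arg)
  also have "\<dots> = (\<Sum>j\<le>d. (Lplus m ^^ j) (\<Sum>jj\<in>Jset m (d - j). pscale (c (jj(m := j))) (psiG \<nu> jj m)))"
    by (simp add: rpoly_pair.linear_sum[OF linear_funpow[OF linear_Lplus]]
        rpoly_pair.linear_scale[OF linear_funpow[OF linear_Lplus]])
  finally show ?thesis .
qed

section \<open>Linear independence\<close>

lemma independent_family_psiG_if_arg:
  assumes "2 \<le> m" "0 < \<nu> m" "independent_family (\<lambda>jj. psiG_arg \<nu> jj m) (Jset m d)"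
  shows "independent_family (\<lambda>jj. psiG \<nu> jj m) (Jset m d)"
  unfolding independent_family_def
proof (intro allI impI)
  fix c assume "(\<Sum>jj\<in>Jset m d. pscale (c jj) (psiG \<nu> jj m)) = 0"
  then have "(\<Sum>jj\<in>Jset m d. pscale (c jj) (psiG_arg \<nu> jj m)) = 0"
    using assms(1,2)
    by (intro sum_eq_0_if_sum_CK_eq_0[OF hom_poly_psiG_arg]) (simp_all add: psiG_eq_CK)
  then show "\<forall>jj\<in>Jset m d. c jj = 0"
    using assms(3) unfolding independent_family_def by blast
qed

lemma independent_family_psiG_arg_2: "independent_family (\<lambda>jj. psiG_arg \<nu> jj 2) (Jset 2 d)"
proof -
  let ?j = "(\<lambda>_. 0::nat)(1 := d)"
  have "c ?j = 0" if sum0: "(\<Sum>i\<in>{?j}. pscale (c i) (psiG_arg \<nu> i 2)) = 0" for c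
  proof -
    have "c ?j * x1pow d ?j = (\<Sum>i\<in>{?j}. pscale (c i) (psiG_arg \<nu> i 2)) ?j"
      by (simp add: psiG_arg_def pscale_apply)
    also have "\<dots> = 0"
      by (simp only: sum0 zero_fun_apply)
    moreover have "x1pow d ?j = 1"
      by (simp add: x1pow_def)
    ultimately show "c ?j = 0"
      by simp
  qed
  then show ?thesis
    unfolding independent_family_def Jset_2 by blast
qed

lemma independent_family_psiG_arg_Suc:
  assumes "2 \<le> m" "\<And>i. i \<in> {1..m} \<Longrightarrow> 0 < \<nu> i"
    and indep: "\<And>e. independent_family (\<lambda>jj. psiG \<nu> jj m) (Jset m e)"
  shows "independent_family (\<lambda>jj. psiG_arg \<nu> jj (Suc m)) (Jset (Suc m) d)"
proof -
  have "c jj = 0"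
    if sum0: "(\<Sum>jj\<in>Jset (Suc m) d. pscale (c jj) (psiG_arg \<nu> jj (Suc m))) = 0"
      and jj: "jj \<in> Jset (Suc m) d" for c jj
  proof -
    define h where "h j = (\<Sum>jj\<in>Jset m (d - j). pscale (c (jj(m := j))) (psiG \<nu> jj m))" for j
    have pos: "0 < (\<Sum>i\<in>{1..m}. \<nu> i)"
      using assms(1,2) by (intro sum_pos) auto
    have hom: "hom_poly m (d - j) (h j)" for j
      unfolding h_def
    proof (intro hom_poly_sum hom_poly_scale)
      fix jj assume "jj \<in> Jset m (d - j)"
      then show "hom_poly m (d - j) (psiG \<nu> jj m)"
        using hom_poly_psiG[OF assms(1), of jj \<nu>] by (simp add: Jset_def)
    qed
    have harm: "Lminus \<nu> m (h j) = 0" for j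
      using Lminus_psiG[OF assms(1)] assms(1,2)
      by (simp add: h_def rpoly_pair.linear_sum[OF linear_Lminus]
          rpoly_pair.linear_scale[OF linear_Lminus])
    have decomp: "(\<Sum>j\<le>d. (Lplus m ^^ j) (h j)) = 0"
      using sum0 unfolding sum_psiG_arg_Suc[OF assms(1)] h_def .
    have "h j = 0" if "j \<le> d" for j
      by (rule Lplus_decomposition_unique[OF pos hom harm decomp that])
    moreover have "jj m \<le> d" "jj(m := 0) \<in> Jset m (d - jj m)"
      using Jset_Suc_restrict[OF _ jj] assms(1) by auto
    ultimately have "c ((jj(m := 0))(m := jj m)) = 0"
      using spec[OF indep[unfolded independent_family_def], of "\<lambda>jj'. c (jj'(m := jj m))"]
      unfolding h_def by blast
    then show "c jj = 0"
      by simp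
  qed
  then show ?thesis
    unfolding independent_family_def by blast
qed

lemma independent_family_psiG_arg:
  assumes "2 \<le> m" "\<And>i. i \<in> {1..m} \<Longrightarrow> 0 < \<nu> i"
  shows "independent_family (\<lambda>jj. psiG_arg \<nu> jj m) (Jset m d)"
  using assms
proof (induction m arbitrary: d rule: nat_induct_at_least)
  case base
  show ?case by (rule independent_family_psiG_arg_2)
next
  case (Suc m)
  have "independent_family (\<lambda>jj. psiG \<nu> jj m) (Jset m e)" for e
    using Suc by (intro independent_family_psiG_if_arg) auto
  then show ?case
    using Suc by (intro independent_family_psiG_arg_Suc) auto
qed

lemma independent_family_psiG:
  assumes "2 \<le> m" "\<And>i. i \<in> {1..m} \<Longrightarrow> 0 < \<nu> i"
  shows "independent_family (\<lambda>jj. psiG \<nu> jj m) (Jset m d)"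
  using assms by (intro independent_family_psiG_if_arg independent_family_psiG_arg) auto

section \<open>Spanning\<close>

definition monomial :: "(nat \<Rightarrow> nat) \<Rightarrow> rpoly" where
  "monomial \<beta> = (\<lambda>\<alpha>. if \<alpha> = \<beta> then 1 else 0)"

lemma hom_poly_in_span_monomials:
  assumes "hom_poly (n - 1) k p"
  shows "p \<in> rpoly.span (monomial ` Jset n k)"
proof -
  have "p = (\<Sum>\<beta>\<in>Jset n k. pscale (p \<beta>) (monomial \<beta>))"
  proof
    fix \<alpha>
    have "(\<Sum>\<beta>\<in>Jset n k. pscale (p \<beta>) (monomial \<beta>)) \<alpha> =
        (\<Sum>\<beta>\<in>Jset n k. if \<alpha> = \<beta> then p \<beta> else 0)"
      unfolding sum_apply pscale_apply monomial_def by (rule sum.cong) auto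
    also have "\<dots> = (if \<alpha> \<in> Jset n k then p \<alpha> else 0)"
      by (simp add: finite_Jset)
    also have "\<dots> = p \<alpha>"
      using hom_poly_apply[OF assms, of \<alpha>] unfolding Jset_def by auto
    finally show "p \<alpha> = (\<Sum>\<beta>\<in>Jset n k. pscale (p \<beta>) (monomial \<beta>)) \<alpha>"
      by simp
  qed
  also have "\<dots> \<in> rpoly.span (monomial ` Jset n k)"
    by (intro rpoly.span_sum rpoly.span_scale rpoly.span_base) auto
  finally show ?thesis .
qed

lemma hom_poly_in_span_psiG_arg:
  assumes "2 \<le> n" "\<And>i. i \<in> {1..n} \<Longrightarrow> 0 < \<nu> i" "hom_poly (n - 1) k p"
  shows "p \<in> rpoly.span ((\<lambda>jj. psiG_arg \<nu> jj n) ` Jset n k)"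
proof -
  let ?A = "(\<lambda>jj. psiG_arg \<nu> jj n) ` Jset n k"
  have indep: "independent_family (\<lambda>jj. psiG_arg \<nu> jj n) (Jset n k)"
    by (rule independent_family_psiG_arg[OF assms(1,2)])
  have "psiG_arg \<nu> jj n \<in> rpoly.span (monomial ` Jset n k)" if "jj \<in> Jset n k" for jj
  proof -
    have "sum jj {1..n-1} = k"
      using that by (simp add: Jset_def)
    then show ?thesis
      using hom_poly_in_span_monomials hom_poly_psiG_arg[OF assms(1), of jj \<nu>] by simp
  qed
  then have A_span: "?A \<subseteq> rpoly.span (monomial ` Jset n k)"
    by blast
  have card_le: "card (monomial ` Jset n k) \<le> card ?A"
    using card_image_le[OF finite_Jset]
      card_image[OF independent_family_inj_on[OF indep finite_Jset]]
    by simp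
  have "rpoly.span (monomial ` Jset n k) \<subseteq> rpoly.span ?A"
    by (rule rpoly.span_subset_if_independent_card_ge[OF finite_imageI[OF finite_Jset]
          independent_family_independent[OF indep finite_Jset] A_span card_le])
  then show ?thesis
    using hom_poly_in_span_monomials[OF assms(3)] by (rule subsetD)
qed

lemma HBG_eq_sum_psiG_if_restriction_eq:
  assumes "2 \<le> n" "0 < \<nu> n" "f \<in> HBG \<nu> n k"
    and restr: "\<And>\<alpha>. \<alpha> n = 0 \<Longrightarrow> f \<alpha> = (\<Sum>jj\<in>Jset n k. pscale (u jj) (psiG_arg \<nu> jj n)) \<alpha>"
  shows "f = (\<Sum>jj\<in>Jset n k. pscale (u jj) (psiG \<nu> jj n))"
proof -
  define g where "g = f - (\<Sum>jj\<in>Jset n k. pscale (u jj) (psiG \<nu> jj n))"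
  have n: "1 \<le> n" using assms(1) by simp
  have "Lminus \<nu> n g = 0"
    using assms(3) Lminus_psiG[where \<nu> = \<nu>, OF assms(1,2)]
    by (simp add: g_def HBG_def rpoly_pair.linear_diff[OF linear_Lminus]
        rpoly_pair.linear_sum[OF linear_Lminus] rpoly_pair.linear_scale[OF linear_Lminus])
  moreover have "g \<alpha> = 0" if "\<alpha> n = 0" for \<alpha>
  proof -
    have "hom_poly (n - 1) (sum jj {1..n - 1}) (psiG_arg \<nu> jj n)" for jj
      by (rule hom_poly_psiG_arg[OF assms(1)])
    then have "(\<Sum>jj\<in>Jset n k. pscale (u jj) (psiG \<nu> jj n)) \<alpha> =
        (\<Sum>jj\<in>Jset n k. pscale (u jj) (psiG_arg \<nu> jj n)) \<alpha>"
      unfolding psiG_eq_CK[OF assms(1)] using n assms(2) that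
      by (intro sum_CK_apply_restrict[where \<nu> = \<nu> and m = n and \<alpha> = \<alpha>])
    then show ?thesis
      using restr[of \<alpha>] that by (simp add: g_def)
  qed
  ultimately have "g = 0"
    using Lminus_null_eq_0_if_restriction_eq_0[where \<nu> = \<nu>, OF n assms(2)] by blast
  then show ?thesis
    by (simp add: g_def)
qed

lemma HBG_subset_span_psiG:
  assumes "2 \<le> n" "\<And>i. i \<in> {1..n} \<Longrightarrow> 0 < \<nu> i"
  shows "HBG \<nu> n k \<subseteq> rpoly.span ((\<lambda>jj. psiG \<nu> jj n) ` Jset n k)"
proof
  fix f assume f: "f \<in> HBG \<nu> n k"
  let ?J = "Jset n k"
  have "hom_poly (n - 1) k (\<lambda>\<alpha>. if \<alpha> n = 0 then f \<alpha> else 0)"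
    using hom_poly_restrict_last[OF _ ] f assms(1) by (simp add: HBG_def)
  then have "(\<lambda>\<alpha>. if \<alpha> n = 0 then f \<alpha> else 0) \<in> rpoly.span ((\<lambda>jj. psiG_arg \<nu> jj n) ` ?J)"
    by (intro hom_poly_in_span_psiG_arg[where \<nu> = \<nu>, OF assms(1) assms(2)])
  moreover have "inj_on (\<lambda>jj. psiG_arg \<nu> jj n) ?J"
    by (rule independent_family_inj_on[OF independent_family_psiG_arg[where \<nu> = \<nu>, OF assms]
          finite_Jset])
  ultimately obtain u
    where u: "(\<lambda>\<alpha>. if \<alpha> n = 0 then f \<alpha> else 0) = (\<Sum>jj\<in>?J. pscale (u jj) (psiG_arg \<nu> jj n))"
    using rpoly.span_image_eq_sum[OF finite_Jset] by blast
  have "f = (\<Sum>jj\<in>?J. pscale (u jj) (psiG \<nu> jj n))"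
  proof (rule HBG_eq_sum_psiG_if_restriction_eq[OF assms(1) _ f])
    show "0 < \<nu> n" using assms by simp
    fix \<alpha> :: "nat \<Rightarrow> nat" assume "\<alpha> n = 0"
    then show "f \<alpha> = (\<Sum>jj\<in>?J. pscale (u jj) (psiG_arg \<nu> jj n)) \<alpha>"
      using fun_cong[OF u, of \<alpha>] by simp
  qed
  also have "\<dots> \<in> rpoly.span ((\<lambda>jj. psiG \<nu> jj n) ` ?J)"
    by (intro rpoly.span_sum rpoly.span_scale rpoly.span_base) auto
  finally show "f \<in> rpoly.span ((\<lambda>jj. psiG \<nu> jj n) ` ?J)" .
qed

theorem theorem4p3:
  fixes n k :: nat and \<nu> :: "nat \<Rightarrow> real"
  assumes "n \<ge> 2"
    and "\<And>i. i \<in> {1..n} \<Longrightarrow> \<nu> i > 0"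
  shows "is_basis_family (\<lambda>jj. psiG \<nu> jj n) (Jset n k) (HBG \<nu> n k)"
proof -
  have indep: "independent_family (\<lambda>jj. psiG \<nu> jj n) (Jset n k)"
    using independent_family_psiG assms by blast
  have "0 < \<nu> n"
    using assms by simp
  then have sub: "(\<lambda>jj. psiG \<nu> jj n) ` Jset n k \<subseteq> HBG \<nu> n k"
    using psiG_in_HBG[OF assms(1)] by blast
  show ?thesis
    unfolding is_basis_family_def
  proof (intro conjI)
    show "inj_on (\<lambda>jj. psiG \<nu> jj n) (Jset n k)"
      by (rule independent_family_inj_on[OF indep finite_Jset])
    show "\<not> rpoly.dependent ((\<lambda>jj. psiG \<nu> jj n) ` Jset n k)"
      by (rule independent_family_independent[OF indep finite_Jset])
    show "rpoly.span ((\<lambda>jj. psiG \<nu> jj n) ` Jset n k) = HBG \<nu> n k"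
      using rpoly.span_minimal[OF sub HBG_subspace]
        HBG_subset_span_psiG[where \<nu> = \<nu> and k = k, OF assms]
      by blast
  qed (rule sub)
qed

end
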